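(* Let $H$ be a Hopf algebra (coproduct $\Delta h=h_{(1)}\otimes h_{(2)}$, counit $\epsilon$, antipode $S$) over a field $k$. Then $(H,\Omega^1H)$ has a quantum frame resolution with total space $P=H$, structure quantum group $k$ (so $M=H$), $V=\ker\epsilon\subset H$ with trivial coaction, and $\theta(v)=Sv_{(1)}\otimes v_{(2)}$. The (only possible connection $\omega=0$ and its) covariant derivative and torsion are given, for $\sum h\otimes g\in\Omega^1H$, by the restrictions to $\Omega^1H$ of the linear extensions of \[\nabla(h\otimes g)=1\otimes h\otimes g-hg_{(1)}\otimes Sg_{(2)}\otimes g_{(3)},\qquad T(h\otimes g)=h\otimes g\otimes1-h\otimes1\otimes g+hg_{(1)}\otimes Sg_{(2)}\otimes g_{(3)}.\]
   Context: For a unital algebra $A$, $\Omega^1A=\ker(\mu:A\otimes A\to A)$ with $da=1\otimes a-a\otimes1$, and $\Omega^1A\otimes_A\Omega^1A\subset A^{\otimes3}$, with $d(a\otimes b)=1\otimes a\otimes b-a\otimes1\otimes b+a\otimes b\otimes1$. A quantum frame resolution of $(M,\Omega^1M)$ consists of a quantum principal bundle ($P$ a right comodule algebra over a Hopf algebra $H'$ with invertible antipode, $M$ its coinvariants, $P$ flat over $M$, and $P\otimes_MP\to P\otimes H'$, $p\otimes p'\mapsto pp'^{(1)}\otimes p'^{(2)}$ bijective), a right $H'$-comodule $V$, and an $H'$-comodule map $\theta:V\to\Omega^1P$ with image in $P\Omega^1M$ such that $s_\theta:(P\otimes V)^{H'}\to\Omega^1M$, $\sum p_i\otimes v_i\mapsto\sum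 p_i\theta(v_i)$, is bijective. Given a left strong connection $\omega:H'\to\Omega^1P$ (here only $\omega=0$ is possible since $\ker\epsilon$ of $k$ is $0$), the covariant derivative is $\nabla(w)=1\otimes w-\sum_ip_i\otimes\theta(v_i)-\sum_ip_i{}^{(1)}\omega(p_i{}^{(2)})\theta(v_i)$ for $s_\theta^{-1}(w)=\sum_ip_i\otimes v_i$, and the torsion is $T=d-\nabla$. *)

theory Defs
  imports "HOL-Library.Poly_Mapping"
begin

section \<open>Vector spaces with a chosen basis\<close>

(* A k-vector space with basis indexed by the type 'a is represented as the
space of finitely supported functions 'a \<Rightarrow>\<^sub>0 'k.  Tensor products of such
spaces are the free spaces on the product of the bases (tensors right-nested).
Subspaces (e.g. ker \<epsilon>, coinvariants, \<Omega>^1) are represented as subsets. *)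

definition smul :: "'k::field \<Rightarrow> ('a \<Rightarrow>\<^sub>0 'k) \<Rightarrow> ('a \<Rightarrow>\<^sub>0 'k)" where
  "smul c x = Poly_Mapping.map (\<lambda>a. c * a) x"

definition bas :: "'a \<Rightarrow> ('a \<Rightarrow>\<^sub>0 'k::field)" where
  "bas a = Poly_Mapping.single a 1"

definition lin :: "('a \<Rightarrow> ('b \<Rightarrow>\<^sub>0 'k::field)) \<Rightarrow> ('a \<Rightarrow>\<^sub>0 'k) \<Rightarrow> ('b \<Rightarrow>\<^sub>0 'k)" where
  "lin f x = (\<Sum>a\<in>Poly_Mapping.keys x. smul (Poly_Mapping.lookup x a) (f a))"

definition tens :: "('a \<Rightarrow>\<^sub>0 'k::field) \<Rightarrow> ('b \<Rightarrow>\<^sub>0 'k) \<Rightarrow> ('a \<times> 'b \<Rightarrow>\<^sub>0 'k)" where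
  "tens x y = lin (\<lambda>a. lin (\<lambda>b. bas (a, b)) y) x"

definition tmap :: "(('a \<Rightarrow>\<^sub>0 'k::field) \<Rightarrow> ('c \<Rightarrow>\<^sub>0 'k)) \<Rightarrow> (('b \<Rightarrow>\<^sub>0 'k) \<Rightarrow> ('d \<Rightarrow>\<^sub>0 'k))
    \<Rightarrow> ('a \<times> 'b \<Rightarrow>\<^sub>0 'k) \<Rightarrow> ('c \<times> 'd \<Rightarrow>\<^sub>0 'k)" where
  "tmap f g = lin (\<lambda>(a, b). tens (f (bas a)) (g (bas b)))"

definition rassoc :: "(('a \<times> 'b) \<times> 'c \<Rightarrow>\<^sub>0 'k::field) \<Rightarrow> ('a \<times> 'b \<times> 'c \<Rightarrow>\<^sub>0 'k)" where
  "rassoc = lin (\<lambda>((a, b), c). bas (a, b, c))"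

definition fspan :: "('a \<Rightarrow>\<^sub>0 'k::field) set \<Rightarrow> ('a \<Rightarrow>\<^sub>0 'k) set" where
  "fspan S = {x. \<exists>A f. finite A \<and> A \<subseteq> S \<and> x = (\<Sum>a\<in>A. smul (f a) a)}"

definition subspace :: "('a \<Rightarrow>\<^sub>0 'k::field) set \<Rightarrow> bool" where
  "subspace W \<longleftrightarrow> 0 \<in> W \<and> (\<forall>x\<in>W. \<forall>y\<in>W. x + y \<in> W) \<and> (\<forall>c. \<forall>x\<in>W. smul c x \<in> W)"

definition tensW :: "('a \<Rightarrow>\<^sub>0 'k::field) set \<Rightarrow> ('b \<Rightarrow>\<^sub>0 'k) set \<Rightarrow> ('a \<times> 'b \<Rightarrow>\<^sub>0 'k) set" where
  "tensW A B = fspan {tens a b | a b. a \<in> A \<and> b \<in> B}"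

definition linear_map :: "(('a \<Rightarrow>\<^sub>0 'k::field) \<Rightarrow> ('b \<Rightarrow>\<^sub>0 'k)) \<Rightarrow> bool" where
  "linear_map f \<longleftrightarrow> (\<forall>x y. f (x + y) = f x + f y) \<and> (\<forall>c x. f (smul c x) = smul c (f x))"

definition linear_form :: "(('a \<Rightarrow>\<^sub>0 'k::field) \<Rightarrow> 'k) \<Rightarrow> bool" where
  "linear_form f \<longleftrightarrow> (\<forall>x y. f (x + y) = f x + f y) \<and> (\<forall>c x. f (smul c x) = c * f x)"

definition bilinear_map :: "(('a \<Rightarrow>\<^sub>0 'k::field) \<Rightarrow> ('b \<Rightarrow>\<^sub>0 'k) \<Rightarrow> ('c \<Rightarrow>\<^sub>0 'k)) \<Rightarrow> bool" where
  "bilinear_map m \<longleftrightarrow> (\<forall>x. linear_map (m x)) \<and> (\<forall>y. linear_map (\<lambda>x. m x y))"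

section \<open>Algebras, Hopf algebras, comodules\<close>

record (overloaded) ('a, 'k::zero) alg =
  amul :: "('a \<Rightarrow>\<^sub>0 'k) \<Rightarrow> ('a \<Rightarrow>\<^sub>0 'k) \<Rightarrow> ('a \<Rightarrow>\<^sub>0 'k)"
  aone :: "'a \<Rightarrow>\<^sub>0 'k"

record (overloaded) ('a, 'k::zero) hopf = "('a, 'k) alg" +
  hcop :: "('a \<Rightarrow>\<^sub>0 'k) \<Rightarrow> ('a \<times> 'a \<Rightarrow>\<^sub>0 'k)"
  hcou :: "('a \<Rightarrow>\<^sub>0 'k) \<Rightarrow> 'k"
  hant :: "('a \<Rightarrow>\<^sub>0 'k) \<Rightarrow> ('a \<Rightarrow>\<^sub>0 'k)"

definition mu :: "(('a \<Rightarrow>\<^sub>0 'k::field) \<Rightarrow> ('a \<Rightarrow>\<^sub>0 'k) \<Rightarrow> ('a \<Rightarrow>\<^sub>0 'k)) \<Rightarrow> ('a \<times> 'a \<Rightarrow>\<^sub>0 'k) \<Rightarrow> ('a \<Rightarrow>\<^sub>0 'k)" where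
  "mu m = lin (\<lambda>(a, b). m (bas a) (bas b))"

definition tmul :: "(('a \<Rightarrow>\<^sub>0 'k::field) \<Rightarrow> ('a \<Rightarrow>\<^sub>0 'k) \<Rightarrow> ('a \<Rightarrow>\<^sub>0 'k))
    \<Rightarrow> (('b \<Rightarrow>\<^sub>0 'k) \<Rightarrow> ('b \<Rightarrow>\<^sub>0 'k) \<Rightarrow> ('b \<Rightarrow>\<^sub>0 'k))
    \<Rightarrow> ('a \<times> 'b \<Rightarrow>\<^sub>0 'k) \<Rightarrow> ('a \<times> 'b \<Rightarrow>\<^sub>0 'k) \<Rightarrow> ('a \<times> 'b \<Rightarrow>\<^sub>0 'k)" where
  "tmul m m' X Y = lin (\<lambda>(a, b). lin (\<lambda>(c, d). tens (m (bas a) (bas c)) (m' (bas b) (bas d))) Y) X"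

definition is_alg :: "('a, 'k::field, 'z) alg_scheme \<Rightarrow> bool" where
  "is_alg A \<longleftrightarrow> bilinear_map (amul A)
     \<and> (\<forall>x y z. amul A (amul A x y) z = amul A x (amul A y z))
     \<and> (\<forall>x. amul A (aone A) x = x \<and> amul A x (aone A) = x)"

definition hopf_alg :: "('a, 'k::field, 'z) hopf_scheme \<Rightarrow> bool" where
  "hopf_alg H \<longleftrightarrow> is_alg H \<and> linear_map (hcop H) \<and> linear_form (hcou H) \<and> linear_map (hant H)
     \<and> (\<forall>x. rassoc (tmap (hcop H) id (hcop H x)) = tmap id (hcop H) (hcop H x))
     \<and> (\<forall>x. lin (\<lambda>(a, b). smul (hcou H (bas a)) (bas b)) (hcop H x) = x)
     \<and> (\<forall>x. lin (\<lambda>(a, b). smul (hcou H (bas b)) (bas a)) (hcop H x) = x)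
     \<and> (\<forall>x y. hcop H (amul H x y) = tmul (amul H) (amul H) (hcop H x) (hcop H y))
     \<and> hcop H (aone H) = tens (aone H) (aone H)
     \<and> (\<forall>x y. hcou H (amul H x y) = hcou H x * hcou H y)
     \<and> hcou H (aone H) = 1
     \<and> (\<forall>x. mu (amul H) (tmap (hant H) id (hcop H x)) = smul (hcou H x) (aone H))
     \<and> (\<forall>x. mu (amul H) (tmap id (hant H) (hcop H x)) = smul (hcou H x) (aone H))"

(* the ground field k as (trivial) Hopf algebra, with basis the unit type *)
definition trivial_hopf :: "(unit, 'k::field) hopf" where
  "trivial_hopf = \<lparr>amul = (\<lambda>x y. smul (Poly_Mapping.lookup x ()) y), aone = bas (),
     hcop = (\<lambda>x. smul (Poly_Mapping.lookup x ()) (bas ((), ()))), hcou = (\<lambda>x. Poly_Mapping.lookup x ()), hant = id\<rparr>"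

definition comod_alg :: "('p, 'k::field, 'y) alg_scheme \<Rightarrow> ('h, 'k, 'z) hopf_scheme
    \<Rightarrow> (('p \<Rightarrow>\<^sub>0 'k) \<Rightarrow> ('p \<times> 'h \<Rightarrow>\<^sub>0 'k)) \<Rightarrow> bool" where
  "comod_alg P H \<delta> \<longleftrightarrow> is_alg P \<and> linear_map \<delta>
     \<and> (\<forall>x. rassoc (tmap \<delta> id (\<delta> x)) = tmap id (hcop H) (\<delta> x))
     \<and> (\<forall>x. lin (\<lambda>(a, c). smul (hcou H (bas c)) (bas a)) (\<delta> x) = x)
     \<and> (\<forall>x y. \<delta> (amul P x y) = tmul (amul P) (amul H) (\<delta> x) (\<delta> y))
     \<and> \<delta> (aone P) = tens (aone P) (aone H)"

definition comodule :: "('v \<Rightarrow>\<^sub>0 'k::field) set \<Rightarrow> (('v \<Rightarrow>\<^sub>0 'k) \<Rightarrow> ('v \<times> 'h \<Rightarrow>\<^sub>0 'k))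
    \<Rightarrow> ('h, 'k, 'z) hopf_scheme \<Rightarrow> bool" where
  "comodule W \<rho> H \<longleftrightarrow> subspace W \<and> linear_map \<rho>
     \<and> (\<forall>w\<in>W. \<rho> w \<in> tensW W UNIV)
     \<and> (\<forall>w\<in>W. rassoc (tmap \<rho> id (\<rho> w)) = tmap id (hcop H) (\<rho> w))
     \<and> (\<forall>w\<in>W. lin (\<lambda>(a, c). smul (hcou H (bas c)) (bas a)) (\<rho> w) = w)"

definition coinv :: "('h, 'k::field, 'z) hopf_scheme \<Rightarrow> (('p \<Rightarrow>\<^sub>0 'k) \<Rightarrow> ('p \<times> 'h \<Rightarrow>\<^sub>0 'k))
    \<Rightarrow> ('p \<Rightarrow>\<^sub>0 'k) set" where
  "coinv H \<delta> = {p. \<delta> p = tens p (aone H)}"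

(* tensor product coaction on P \<otimes> V: p\<otimes>v \<mapsto> p0 \<otimes> v0 \<otimes> p1 v1 *)
definition coact2 :: "('h, 'k::field, 'z) hopf_scheme \<Rightarrow> (('p \<Rightarrow>\<^sub>0 'k) \<Rightarrow> ('p \<times> 'h \<Rightarrow>\<^sub>0 'k))
    \<Rightarrow> (('v \<Rightarrow>\<^sub>0 'k) \<Rightarrow> ('v \<times> 'h \<Rightarrow>\<^sub>0 'k)) \<Rightarrow> ('p \<times> 'v \<Rightarrow>\<^sub>0 'k) \<Rightarrow> (('p \<times> 'v) \<times> 'h \<Rightarrow>\<^sub>0 'k)" where
  "coact2 H \<delta> \<rho> = lin (\<lambda>(p, v). lin (\<lambda>(p', c). lin (\<lambda>(v', c').
       tens (bas (p', v')) (amul H (bas c) (bas c'))) (\<rho> (bas v))) (\<delta> (bas p)))"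

definition coinv2 :: "('h, 'k::field, 'z) hopf_scheme \<Rightarrow> (('p \<Rightarrow>\<^sub>0 'k) \<Rightarrow> ('p \<times> 'h \<Rightarrow>\<^sub>0 'k))
    \<Rightarrow> ('v \<Rightarrow>\<^sub>0 'k) set \<Rightarrow> (('v \<Rightarrow>\<^sub>0 'k) \<Rightarrow> ('v \<times> 'h \<Rightarrow>\<^sub>0 'k)) \<Rightarrow> ('p \<times> 'v \<Rightarrow>\<^sub>0 'k) set" where
  "coinv2 H \<delta> W \<rho> = {x. x \<in> tensW UNIV W \<and> coact2 H \<delta> \<rho> x = tens x (aone H)}"

section \<open>Universal calculus\<close>

definition omega1 :: "('p, 'k::field, 'y) alg_scheme \<Rightarrow> ('p \<Rightarrow>\<^sub>0 'k) set \<Rightarrow> ('p \<times> 'p \<Rightarrow>\<^sub>0 'k) set" where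
  "omega1 P M = {x. x \<in> tensW M M \<and> mu (amul P) x = 0}"

definition lact :: "('p, 'k::field, 'y) alg_scheme \<Rightarrow> ('p \<Rightarrow>\<^sub>0 'k) \<Rightarrow> ('p \<times> 'r \<Rightarrow>\<^sub>0 'k) \<Rightarrow> ('p \<times> 'r \<Rightarrow>\<^sub>0 'k)" where
  "lact P p = lin (\<lambda>(a, r). tens (amul P p (bas a)) (bas r))"

(* product \<Omega>^1 P \<otimes>_P \<Omega>^1 P \<subseteq> P^{\<otimes>3}: (a\<otimes>b)(c\<otimes>d) = a \<otimes> bc \<otimes> d *)
definition omul :: "('p, 'k::field, 'y) alg_scheme \<Rightarrow> ('p \<times> 'p \<Rightarrow>\<^sub>0 'k) \<Rightarrow> ('p \<times> 'p \<Rightarrow>\<^sub>0 'k) \<Rightarrow> ('p \<times> 'p \<times> 'p \<Rightarrow>\<^sub>0 'k)" where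
  "omul P X Y = lin (\<lambda>(a, b). lin (\<lambda>(c, d). tens (bas a) (tens (amul P (bas b) (bas c)) (bas d))) Y) X"

definition d1 :: "('p, 'k::field, 'y) alg_scheme \<Rightarrow> ('p \<times> 'p \<Rightarrow>\<^sub>0 'k) \<Rightarrow> ('p \<times> 'p \<times> 'p \<Rightarrow>\<^sub>0 'k)" where
  "d1 P = lin (\<lambda>(a, b). tens (aone P) (tens (bas a) (bas b)) - tens (bas a) (tens (aone P) (bas b))
                       + tens (bas a) (tens (bas b) (aone P)))"

section \<open>Quantum principal bundles and frame resolutions\<close>

(* Flatness of P over the subalgebra M, via the ideal criterion: as a right
M-module (P \<otimes>_M I \<rightarrow> P injective for every left ideal I of M) and as a left
M-module (J \<otimes>_M P \<rightarrow> P injective for every right ideal J of M).  Elements of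
P \<otimes>_M I are represented by elements of P \<otimes> I modulo the balancing relations. *)
definition left_ideal :: "('p, 'k::field, 'y) alg_scheme \<Rightarrow> ('p \<Rightarrow>\<^sub>0 'k) set \<Rightarrow> ('p \<Rightarrow>\<^sub>0 'k) set \<Rightarrow> bool" where
  "left_ideal P M I \<longleftrightarrow> subspace I \<and> I \<subseteq> M \<and> (\<forall>m\<in>M. \<forall>i\<in>I. amul P m i \<in> I)"

definition right_ideal :: "('p, 'k::field, 'y) alg_scheme \<Rightarrow> ('p \<Rightarrow>\<^sub>0 'k) set \<Rightarrow> ('p \<Rightarrow>\<^sub>0 'k) set \<Rightarrow> bool" where
  "right_ideal P M I \<longleftrightarrow> subspace I \<and> I \<subseteq> M \<and> (\<forall>m\<in>M. \<forall>i\<in>I. amul P i m \<in> I)"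

definition flat_over :: "('p, 'k::field, 'y) alg_scheme \<Rightarrow> ('p \<Rightarrow>\<^sub>0 'k) set \<Rightarrow> bool" where
  "flat_over P M \<longleftrightarrow>
     (\<forall>I. left_ideal P M I \<longrightarrow> (\<forall>x\<in>tensW UNIV I. mu (amul P) x = 0 \<longrightarrow>
        x \<in> fspan {tens (amul P p m) i - tens p (amul P m i) | p m i. m \<in> M \<and> i \<in> I}))
   \<and> (\<forall>J. right_ideal P M J \<longrightarrow> (\<forall>x\<in>tensW J UNIV. mu (amul P) x = 0 \<longrightarrow>
        x \<in> fspan {tens (amul P j m) p - tens j (amul P m p) | j m p. j \<in> J \<and> m \<in> M}))"

definition canmap :: "('p, 'k::field, 'y) alg_scheme \<Rightarrow> (('p \<Rightarrow>\<^sub>0 'k) \<Rightarrow> ('p \<times> 'h \<Rightarrow>\<^sub>0 'k))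
    \<Rightarrow> ('p \<times> 'p \<Rightarrow>\<^sub>0 'k) \<Rightarrow> ('p \<times> 'h \<Rightarrow>\<^sub>0 'k)" where
  "canmap P \<delta> = lin (\<lambda>(p, q). lin (\<lambda>(q', c). tens (amul P (bas p) (bas q')) (bas c)) (\<delta> (bas q)))"

(* Quantum principal bundle: the induced map P \<otimes>_M P \<rightarrow> P \<otimes> H is bijective,
i.e. canmap is surjective with kernel exactly the balancing relations of \<otimes>_M. *)
definition qpb :: "('p, 'k::field, 'y) alg_scheme \<Rightarrow> ('h, 'k, 'z) hopf_scheme
    \<Rightarrow> (('p \<Rightarrow>\<^sub>0 'k) \<Rightarrow> ('p \<times> 'h \<Rightarrow>\<^sub>0 'k)) \<Rightarrow> bool" where
  "qpb P H \<delta> \<longleftrightarrow> hopf_alg H \<and> bij (hant H) \<and> comod_alg P H \<delta>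
     \<and> flat_over P (coinv H \<delta>)
     \<and> surj (canmap P \<delta>)
     \<and> (\<forall>x. canmap P \<delta> x = 0 \<longleftrightarrow>
          x \<in> fspan {tens (amul P p m) q - tens p (amul P m q) | p m q. m \<in> coinv H \<delta>})"

definition stheta :: "('p, 'k::field, 'y) alg_scheme \<Rightarrow> (('v \<Rightarrow>\<^sub>0 'k) \<Rightarrow> ('p \<times> 'p \<Rightarrow>\<^sub>0 'k))
    \<Rightarrow> ('p \<times> 'v \<Rightarrow>\<^sub>0 'k) \<Rightarrow> ('p \<times> 'p \<Rightarrow>\<^sub>0 'k)" where
  "stheta P \<theta> = lin (\<lambda>(p, v). lact P (bas p) (\<theta> (bas v)))"

definition qfr :: "('p, 'k::field, 'y) alg_scheme \<Rightarrow> ('h, 'k, 'z) hopf_scheme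
    \<Rightarrow> (('p \<Rightarrow>\<^sub>0 'k) \<Rightarrow> ('p \<times> 'h \<Rightarrow>\<^sub>0 'k)) \<Rightarrow> ('v \<Rightarrow>\<^sub>0 'k) set
    \<Rightarrow> (('v \<Rightarrow>\<^sub>0 'k) \<Rightarrow> ('v \<times> 'h \<Rightarrow>\<^sub>0 'k)) \<Rightarrow> (('v \<Rightarrow>\<^sub>0 'k) \<Rightarrow> ('p \<times> 'p \<Rightarrow>\<^sub>0 'k)) \<Rightarrow> bool" where
  "qfr P H \<delta> W \<rho> \<theta> \<longleftrightarrow> qpb P H \<delta> \<and> comodule W \<rho> H \<and> linear_map \<theta>
     \<and> (\<forall>w\<in>W. \<theta> w \<in> omega1 P UNIV)
     \<and> (\<forall>w\<in>W. coact2 H \<delta> \<delta> (\<theta> w) = tmap \<theta> id (\<rho> w))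
     \<and> (\<forall>w\<in>W. \<theta> w \<in> fspan {lact P p u | p u. u \<in> omega1 P (coinv H \<delta>)})
     \<and> bij_betw (stheta P \<theta>) (coinv2 H \<delta> W \<rho>) (omega1 P (coinv H \<delta>))"

definition nabla :: "('p, 'k::field, 'y) alg_scheme \<Rightarrow> ('h, 'k, 'z) hopf_scheme
    \<Rightarrow> (('p \<Rightarrow>\<^sub>0 'k) \<Rightarrow> ('p \<times> 'h \<Rightarrow>\<^sub>0 'k)) \<Rightarrow> ('v \<Rightarrow>\<^sub>0 'k) set
    \<Rightarrow> (('v \<Rightarrow>\<^sub>0 'k) \<Rightarrow> ('v \<times> 'h \<Rightarrow>\<^sub>0 'k)) \<Rightarrow> (('v \<Rightarrow>\<^sub>0 'k) \<Rightarrow> ('p \<times> 'p \<Rightarrow>\<^sub>0 'k))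
    \<Rightarrow> (('h \<Rightarrow>\<^sub>0 'k) \<Rightarrow> ('p \<times> 'p \<Rightarrow>\<^sub>0 'k)) \<Rightarrow> ('p \<times> 'p \<Rightarrow>\<^sub>0 'k) \<Rightarrow> ('p \<times> 'p \<times> 'p \<Rightarrow>\<^sub>0 'k)" where
  "nabla P H \<delta> W \<rho> \<theta> \<omega> w =
     (let x = (THE x. x \<in> coinv2 H \<delta> W \<rho> \<and> stheta P \<theta> x = w) in
        tens (aone P) w
      - lin (\<lambda>(p, v). tens (bas p) (\<theta> (bas v))) x
      - lin (\<lambda>(p, v). lin (\<lambda>(p', c). lact P (bas p') (omul P (\<omega> (bas c)) (\<theta> (bas v)))) (\<delta> (bas p))) x)"

definition torsion :: "('p, 'k::field, 'y) alg_scheme \<Rightarrow> ('h, 'k, 'z) hopf_scheme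
    \<Rightarrow> (('p \<Rightarrow>\<^sub>0 'k) \<Rightarrow> ('p \<times> 'h \<Rightarrow>\<^sub>0 'k)) \<Rightarrow> ('v \<Rightarrow>\<^sub>0 'k) set
    \<Rightarrow> (('v \<Rightarrow>\<^sub>0 'k) \<Rightarrow> ('v \<times> 'h \<Rightarrow>\<^sub>0 'k)) \<Rightarrow> (('v \<Rightarrow>\<^sub>0 'k) \<Rightarrow> ('p \<times> 'p \<Rightarrow>\<^sub>0 'k))
    \<Rightarrow> (('h \<Rightarrow>\<^sub>0 'k) \<Rightarrow> ('p \<times> 'p \<Rightarrow>\<^sub>0 'k)) \<Rightarrow> ('p \<times> 'p \<Rightarrow>\<^sub>0 'k) \<Rightarrow> ('p \<times> 'p \<times> 'p \<Rightarrow>\<^sub>0 'k)" where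
  "torsion P H \<delta> W \<rho> \<theta> \<omega> w = d1 P w - nabla P H \<delta> W \<rho> \<theta> \<omega> w"

end

theory Submission
  imports Defs
begin

text \<open>
Since the structure group is the ground field, every element of \<open>H\<close> is coinvariant and the
bundle axioms only concern the product \<open>\<mu>\<close>: the canonical map is \<open>\<mu>\<close> followed by
\<open>H \<cong> H \<otimes> k\<close>, and its kernel \<open>\<Omega>\<^sup>1H\<close> is spanned by the balancing relations because
\<open>x - 1 \<otimes> \<mu>(x)\<close> always lies in their span. This also gives flatness, for any algebra.

For the frame, \<open>s\<^sub>\<theta>(h \<otimes> v) = h Sv\<^sub>1 \<otimes> v\<^sub>2\<close> is inverted on all of \<open>H \<otimes> H\<close> by
\<open>h \<otimes> g \<mapsto> h g\<^sub>1 \<otimes> g\<^sub>2\<close>, and the antipode and counit axioms give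
\<open>\<mu> \<circ> s\<^sub>\<theta> = id \<otimes> \<epsilon>\<close> and \<open>(id \<otimes> \<epsilon>) \<circ> s\<^sub>\<theta>\<^sup>-\<^sup>1 = \<mu>\<close>. Hence \<open>s\<^sub>\<theta>\<close> restricts to a bijection
\<open>H \<otimes> ker \<epsilon> \<cong> \<Omega>\<^sup>1H\<close>. The formula for \<open>\<nabla>\<close> is then read off, the connection term vanishing
because a connection kills \<open>1\<close>, which spans \<open>k\<close>.
\<close>

section \<open>Linear algebra on free vector spaces\<close>

lemma lookup_smul [simp]: "Poly_Mapping.lookup (smul c x) a = c * Poly_Mapping.lookup x a"
  unfolding smul_def by (simp add: Poly_Mapping.map.rep_eq when_def)

lemma lookup_bas: "Poly_Mapping.lookup (bas a :: 'a \<Rightarrow>\<^sub>0 'k::field) b = (if a = b then 1 else 0)"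
  unfolding bas_def by (simp add: lookup_single when_def)

lemma lookup_bas_self [simp]: "Poly_Mapping.lookup (bas a :: 'a \<Rightarrow>\<^sub>0 'k::field) a = 1"
  by (simp add: lookup_bas)

lemma smul_add_right: "smul c (x + y) = smul c x + smul c y"
  by (rule poly_mapping_eqI) (simp add: lookup_add algebra_simps)

lemma smul_add_left: "smul (c + d) x = smul c x + smul d x"
  by (rule poly_mapping_eqI) (simp add: lookup_add algebra_simps)

lemma smul_diff_right: "smul c (x - y) = smul c x - smul c y"
  by (rule poly_mapping_eqI) (simp add: lookup_minus algebra_simps)

lemma smul_smul: "smul c (smul d x) = smul (c * d) x"
  by (rule poly_mapping_eqI) simp

lemma smul_one [simp]: "smul 1 x = x"
  by (rule poly_mapping_eqI) simp

lemma smul_zero_left [simp]: "smul 0 x = 0"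
  by (rule poly_mapping_eqI) simp

lemma smul_zero_right [simp]: "smul c 0 = 0"
  by (rule poly_mapping_eqI) simp

lemma uminus_eq_smul: "- y = smul (-1) y"
  by (rule poly_mapping_eqI) simp

lemma smul_sum: "smul c (sum f A) = (\<Sum>a\<in>A. smul c (f a))"
  by (induction A rule: infinite_finite_induct) (auto simp: smul_add_right)

lemma lin_eq_sum_superset:
  assumes "finite S" "Poly_Mapping.keys x \<subseteq> S"
  shows "lin f x = (\<Sum>a\<in>S. smul (Poly_Mapping.lookup x a) (f a))"
  unfolding lin_def
  by (rule sum.mono_neutral_left) (use assms in \<open>auto simp: in_keys_iff\<close>)

lemma lin_add: "lin f (x + y) = lin f x + lin f y"
proof -
  let ?S = "Poly_Mapping.keys x \<union> Poly_Mapping.keys y"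
  have "Poly_Mapping.keys (x + y) \<subseteq> ?S"
    by (rule Poly_Mapping.keys_add)
  then show ?thesis
    by (simp add: lin_eq_sum_superset[of ?S] lookup_add smul_add_left sum.distrib)
qed

lemma lin_smul: "lin f (smul c x) = smul c (lin f x)"
proof -
  have "Poly_Mapping.keys (smul c x) \<subseteq> Poly_Mapping.keys x"
    by (auto simp: in_keys_iff)
  then show ?thesis
    by (simp add: lin_eq_sum_superset[of "Poly_Mapping.keys x"] smul_sum smul_smul)
qed

lemma lin_bas [simp]: "lin f (bas a) = f a"
  by (simp add: lin_eq_sum_superset[of "{a}"] lookup_bas bas_def)

lemma lin_zero [simp]: "lin f 0 = 0"
  by (simp add: lin_def)

lemma lin_bas_self: "lin bas x = x"
proof (rule poly_mapping_eqI)
  fix k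
  have "Poly_Mapping.lookup (lin bas x) k
      = (\<Sum>a\<in>Poly_Mapping.keys x. Poly_Mapping.lookup x a * (if a = k then 1 else 0))"
    by (simp add: lin_def lookup_sum lookup_bas)
  also have "\<dots> = Poly_Mapping.lookup x k"
    by (cases "k \<in> Poly_Mapping.keys x") (simp_all add: if_distrib in_keys_iff cong: if_cong)
  finally show "Poly_Mapping.lookup (lin bas x) k = Poly_Mapping.lookup x k" .
qed

lemma lin_fun_add: "lin (\<lambda>a. f a + g a) x = lin f x + lin g x"
  unfolding lin_def by (simp add: smul_add_right sum.distrib)

lemma lin_fun_diff: "lin (\<lambda>a. f a - g a) x = lin f x - lin g x"
  unfolding lin_def by (simp add: smul_diff_right sum_subtractf)

lemma lin_fun_smul: "lin (\<lambda>a. smul c (f a)) x = smul c (lin f x)"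
  unfolding lin_def by (simp add: smul_sum smul_smul mult.commute)

lemma lin_case_prod_add:
  "lin (\<lambda>(a, b). f a b + g a b) x = lin (\<lambda>(a, b). f a b) x + lin (\<lambda>(a, b). g a b) x"
  using lin_fun_add[of "case_prod f" "case_prod g"] by (simp add: case_prod_beta')

lemma lin_case_prod_diff:
  "lin (\<lambda>(a, b). f a b - g a b) x = lin (\<lambda>(a, b). f a b) x - lin (\<lambda>(a, b). g a b) x"
  using lin_fun_diff[of "case_prod f" "case_prod g"] by (simp add: case_prod_beta')

lemma lin_case_prod_zero: "lin (\<lambda>(a, b). 0) x = 0"
  by (simp add: lin_def)

lemma linear_map_lin: "linear_map (lin f)"
  unfolding linear_map_def by (simp add: lin_add lin_smul)

lemma linear_map_add: "linear_map L \<Longrightarrow> L (x + y) = L x + L y"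
  unfolding linear_map_def by blast

lemma linear_map_smul: "linear_map L \<Longrightarrow> L (smul c x) = smul c (L x)"
  unfolding linear_map_def by blast

lemma linear_map_zero: "linear_map L \<Longrightarrow> L 0 = 0"
  using linear_map_smul[of L 0 0] by simp

lemma linear_map_minus: "linear_map L \<Longrightarrow> L (- x) = - L x"
  by (simp add: uminus_eq_smul[of x] uminus_eq_smul[of "L x"] linear_map_smul)

lemma linear_map_diff: "linear_map L \<Longrightarrow> L (x - y) = L x - L y"
  using linear_map_add[of L x "- y"] by (simp add: linear_map_minus)

lemma linear_map_sum: "linear_map L \<Longrightarrow> L (sum g A) = (\<Sum>a\<in>A. L (g a))"
  by (induction A rule: infinite_finite_induct) (auto simp: linear_map_zero linear_map_add)

lemma linear_map_lin_comp: "linear_map L \<Longrightarrow> L (lin f x) = lin (\<lambda>a. L (f a)) x"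
  unfolding lin_def by (simp add: linear_map_sum linear_map_smul)

lemma linear_map_eq_lin: "linear_map L \<Longrightarrow> L x = lin (\<lambda>a. L (bas a)) x"
  by (metis lin_bas_self linear_map_lin_comp)

lemma linear_map_ext:
  "linear_map L1 \<Longrightarrow> linear_map L2 \<Longrightarrow> (\<And>a. L1 (bas a) = L2 (bas a)) \<Longrightarrow> L1 x = L2 x"
  using linear_map_eq_lin[of L1 x] linear_map_eq_lin[of L2 x] by simp

lemma linear_map_ext_prod:
  "linear_map L1 \<Longrightarrow> linear_map L2 \<Longrightarrow> (\<And>a b. L1 (bas (a, b)) = L2 (bas (a, b))) \<Longrightarrow> L1 x = L2 x"
  by (rule linear_map_ext) auto

lemma linear_map_id: "linear_map id" "linear_map (\<lambda>x. x)"
  unfolding linear_map_def by auto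

lemma linear_map_comp: "linear_map f \<Longrightarrow> linear_map g \<Longrightarrow> linear_map (\<lambda>x. f (g x))"
  unfolding linear_map_def by auto

lemma linear_map_diff_fun: "linear_map f \<Longrightarrow> linear_map g \<Longrightarrow> linear_map (\<lambda>x. f x - g x)"
  unfolding linear_map_def by (auto simp: smul_diff_right algebra_simps)

lemma linear_map_smul_fun: "linear_map (smul c)"
  unfolding linear_map_def by (auto simp: smul_add_right smul_smul mult.commute)

lemma linear_map_lin_param:
  assumes "\<And>a. linear_map (\<lambda>p. F p a)"
  shows "linear_map (\<lambda>p. lin (F p) x)"
proof -
  have "F (p + q) = (\<lambda>a. F p a + F q a)" "F (smul c p) = (\<lambda>a. smul c (F p a))" for p q c
    using assms unfolding linear_map_def by auto
  then show ?thesis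
    unfolding linear_map_def by (simp add: lin_fun_add lin_fun_smul)
qed

lemma tens_bas [simp]: "tens (bas a) (bas b) = bas (a, b)"
  by (simp add: tens_def)

lemma linear_map_tens_left: "linear_map (\<lambda>x. tens x y)"
  unfolding tens_def by (rule linear_map_lin)

lemma linear_map_tens_right: "linear_map (tens x)"
  unfolding tens_def by (rule linear_map_lin_param) (rule linear_map_lin)

lemma tens_smul_left: "tens (smul c x) y = smul c (tens x y)"
  by (rule linear_map_smul[OF linear_map_tens_left])

lemma tens_smul_right: "tens x (smul c y) = smul c (tens x y)"
  by (rule linear_map_smul[OF linear_map_tens_right])

lemma bilinear_ext:
  assumes "\<And>y. linear_map (\<lambda>x. F x y)" "\<And>y. linear_map (\<lambda>x. G x y)"
    and "\<And>a. linear_map (\<lambda>y. F (bas a) y)" "\<And>a. linear_map (\<lambda>y. G (bas a) y)"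
    and "\<And>a b. F (bas a) (bas b) = G (bas a) (bas b)"
  shows "F x y = G x y"
proof -
  have "F (bas a) y = G (bas a) y" for a
    by (rule linear_map_ext[OF assms(3,4)]) (rule assms(5))
  then show ?thesis
    by (rule linear_map_ext[OF assms(1,2)])
qed

lemma lin_tens_bas: "lin F (tens (bas a) Y) = lin (\<lambda>(y, z). F (a, y, z)) Y"
  by (rule linear_map_ext_prod[OF linear_map_comp[OF linear_map_lin linear_map_tens_right] linear_map_lin])
     simp

lemma linear_map_tmap: "linear_map (tmap f g)"
  unfolding tmap_def by (rule linear_map_lin)

lemma tmap_bas: "tmap f g (bas (a, b)) = tens (f (bas a)) (g (bas b))"
  by (simp add: tmap_def)

lemma tmap_tens:
  assumes "linear_map f" "linear_map g"
  shows "tmap f g (tens x y) = tens (f x) (g y)"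
proof (rule bilinear_ext[where F="\<lambda>x y. tmap f g (tens x y)" and G="\<lambda>x y. tens (f x) (g y)"])
  show "linear_map (\<lambda>x. tmap f g (tens x y))" for y
    by (rule linear_map_comp[OF linear_map_tmap linear_map_tens_left])
  show "linear_map (\<lambda>x. tens (f x) (g y))" for y
    by (rule linear_map_comp[OF linear_map_tens_left assms(1)])
  show "linear_map (\<lambda>y. tmap f g (tens (bas a) y))" for a
    by (rule linear_map_comp[OF linear_map_tmap linear_map_tens_right])
  show "linear_map (\<lambda>y. tens (f (bas a)) (g y))" for a
    by (rule linear_map_comp[OF linear_map_tens_right assms(2)])
qed (simp add: tmap_def)

lemma linear_map_rassoc: "linear_map rassoc"
  unfolding rassoc_def by (rule linear_map_lin)

definition tmap12 :: "(('a \<times> 'a \<Rightarrow>\<^sub>0 'k::field) \<Rightarrow> ('a \<Rightarrow>\<^sub>0 'k)) \<Rightarrow> ('a \<times> 'a \<times> 'a \<Rightarrow>\<^sub>0 'k) \<Rightarrow> ('a \<times> 'a \<Rightarrow>\<^sub>0 'k)"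
  where "tmap12 F = lin (\<lambda>(a, c, d). tens (F (bas (a, c))) (bas d))"

lemma linear_map_tmap12: "linear_map (tmap12 F)"
  unfolding tmap12_def by (rule linear_map_lin)

lemma tmap12_rassoc: "tmap12 F (rassoc Z) = tmap F id Z"
proof (rule linear_map_ext[OF linear_map_comp[OF linear_map_tmap12 linear_map_rassoc] linear_map_tmap])
  fix a :: "('a \<times> 'a) \<times> 'a"
  obtain x c d where "a = ((x, c), d)"
    using prod.collapse by metis
  then show "tmap12 F (rassoc (bas a)) = tmap F id (bas a)"
    by (simp add: rassoc_def tmap12_def tmap_bas)
qed

lemma subspace_zero: "subspace V \<Longrightarrow> 0 \<in> V"
  unfolding subspace_def by blast

lemma subspace_add: "subspace V \<Longrightarrow> x \<in> V \<Longrightarrow> y \<in> V \<Longrightarrow> x + y \<in> V"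
  unfolding subspace_def by blast

lemma subspace_smul: "subspace V \<Longrightarrow> x \<in> V \<Longrightarrow> smul c x \<in> V"
  unfolding subspace_def by blast

lemma subspace_diff: "subspace V \<Longrightarrow> x \<in> V \<Longrightarrow> y \<in> V \<Longrightarrow> x - y \<in> V"
  by (metis diff_conv_add_uminus subspace_add subspace_smul uminus_eq_smul)

lemma subspace_sum: "subspace V \<Longrightarrow> (\<And>a. a \<in> A \<Longrightarrow> g a \<in> V) \<Longrightarrow> sum g A \<in> V"
  by (induction A rule: infinite_finite_induct) (auto simp: subspace_zero subspace_add)

lemma subspace_lin: "subspace V \<Longrightarrow> (\<And>a. f a \<in> V) \<Longrightarrow> lin f x \<in> V"
  unfolding lin_def by (rule subspace_sum) (auto simp: subspace_smul)

lemma linear_map_in_subspace: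
  "linear_map L \<Longrightarrow> subspace V \<Longrightarrow> (\<And>a. L (bas a) \<in> V) \<Longrightarrow> L x \<in> V"
  using linear_map_eq_lin[of L x] subspace_lin[of V "\<lambda>a. L (bas a)" x] by simp

lemma subspace_preimage: "linear_map L \<Longrightarrow> subspace V \<Longrightarrow> subspace {x. L x \<in> V}"
  unfolding subspace_def by (auto simp: linear_map_zero linear_map_add linear_map_smul)

lemma subspace_kernel: "linear_map L \<Longrightarrow> subspace {x. L x = 0}"
  using subspace_preimage[of L "{0}"] by (simp add: subspace_def)

lemma subspace_fspan: "subspace (fspan S)"
  unfolding subspace_def
proof (intro conjI ballI allI)
  show "0 \<in> fspan S"
    unfolding fspan_def by (intro CollectI exI[of _ "{}"]) simp
next
  fix x y assume "x \<in> fspan S" "y \<in> fspan S"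
  then obtain A f B g where A: "finite A" "A \<subseteq> S" "x = (\<Sum>a\<in>A. smul (f a) a)"
    and B: "finite B" "B \<subseteq> S" "y = (\<Sum>a\<in>B. smul (g a) a)"
    unfolding fspan_def by blast
  define h where "h a = (if a \<in> A then f a else 0) + (if a \<in> B then g a else 0)" for a
  have "(\<Sum>a\<in>A \<union> B. smul (h a) a)
      = (\<Sum>a\<in>A \<union> B. smul (if a \<in> A then f a else 0) a) + (\<Sum>a\<in>A \<union> B. smul (if a \<in> B then g a else 0) a)"
    unfolding h_def by (simp only: smul_add_left sum.distrib)
  also have "(\<Sum>a\<in>A \<union> B. smul (if a \<in> A then f a else 0) a) = x"
    unfolding A(3) using A(1) B(1) by (intro sum.mono_neutral_cong_right) auto
  also have "(\<Sum>a\<in>A \<union> B. smul (if a \<in> B then g a else 0) a) = y"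
    unfolding B(3) using A(1) B(1) by (intro sum.mono_neutral_cong_right) auto
  finally have "x + y = (\<Sum>a\<in>A \<union> B. smul (h a) a)"
    by simp
  moreover have "finite (A \<union> B)" "A \<union> B \<subseteq> S"
    using A B by auto
  ultimately show "x + y \<in> fspan S"
    unfolding fspan_def by (intro CollectI exI[of _ "A \<union> B"] exI[of _ h]) simp
next
  fix c x assume "x \<in> fspan S"
  then obtain A f where A: "finite A" "A \<subseteq> S" "x = (\<Sum>a\<in>A. smul (f a) a)"
    unfolding fspan_def by blast
  then have "smul c x = (\<Sum>a\<in>A. smul (c * f a) a)"
    by (simp add: smul_sum smul_smul)
  with A(1,2) show "smul c x \<in> fspan S"
    unfolding fspan_def by (intro CollectI exI[of _ A] exI[of _ "\<lambda>a. c * f a"]) simp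
qed

lemma fspan_base: "s \<in> S \<Longrightarrow> s \<in> fspan S"
  unfolding fspan_def by (rule CollectI, rule exI[of _ "{s}"], rule exI[of _ "\<lambda>_. 1"]) auto

lemma fspan_least:
  assumes "subspace V" "S \<subseteq> V" "x \<in> fspan S"
  shows "x \<in> V"
proof -
  obtain A f where A: "finite A" "A \<subseteq> S" "x = (\<Sum>a\<in>A. smul (f a) a)"
    using assms(3) unfolding fspan_def by blast
  show ?thesis
    unfolding A(3) using A(2) assms(1,2) by (intro subspace_sum) (auto intro: subspace_smul)
qed

lemma tens_in_tensW: "a \<in> A \<Longrightarrow> b \<in> B \<Longrightarrow> tens a b \<in> tensW A B"
  unfolding tensW_def by (rule fspan_base) blast

lemma tensW_UNIV: "x \<in> tensW UNIV UNIV"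
proof (rule linear_map_in_subspace[OF linear_map_id(2)])
  show "subspace (tensW UNIV UNIV)"
    unfolding tensW_def by (rule subspace_fspan)
  show "bas a \<in> tensW UNIV UNIV" for a :: "'a \<times> 'b"
    using tens_in_tensW[of "bas (fst a)" UNIV "bas (snd a)" UNIV] by simp
qed

section \<open>The ground field as a Hopf algebra coacting trivially\<close>

lemma trivial_hopf_simps [simp]:
  "amul trivial_hopf x y = smul (Poly_Mapping.lookup x ()) y"
  "aone trivial_hopf = bas ()"
  "hcop trivial_hopf x = smul (Poly_Mapping.lookup x ()) (bas ((), ()))"
  "hcou trivial_hopf x = Poly_Mapping.lookup x ()"
  "hant trivial_hopf = id"
  by (simp_all add: trivial_hopf_def)

lemma unit_vector_eq: "(x :: unit \<Rightarrow>\<^sub>0 'k::field) = smul (Poly_Mapping.lookup x ()) (bas ())"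
  by (rule poly_mapping_eqI) (simp add: lookup_bas)

lemma hopf_alg_trivial_hopf: "hopf_alg (trivial_hopf :: (unit, 'k::field) hopf)"
  unfolding hopf_alg_def is_alg_def bilinear_map_def
proof (intro conjI allI)
  let ?T = "trivial_hopf :: (unit, 'k) hopf"
  show "linear_map (amul ?T x)" for x
    by (simp add: trivial_hopf_def linear_map_smul_fun)
  show "linear_map (\<lambda>x. amul ?T x y)" for y
    unfolding linear_map_def by (simp add: lookup_add smul_add_left smul_smul)
  show "amul ?T (amul ?T x y) z = amul ?T x (amul ?T y z)" for x y z
    by (simp add: smul_smul)
  show "amul ?T (aone ?T) x = x" for x
    by simp
  show "amul ?T x (aone ?T) = x" for x
    by (simp flip: unit_vector_eq)
  show "linear_map (hcop ?T)"
    unfolding linear_map_def by (simp add: lookup_add smul_add_left smul_smul)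
  show "linear_form (hcou ?T)"
    unfolding linear_form_def by (simp add: lookup_add)
  show "linear_map (hant ?T)"
    by (simp add: linear_map_id)
  show "rassoc (tmap (hcop ?T) id (hcop ?T x)) = tmap id (hcop ?T) (hcop ?T x)" for x
    by (simp add: linear_map_smul[OF linear_map_tmap] tmap_bas rassoc_def lin_smul)
  show "lin (\<lambda>(a, b). smul (hcou ?T (bas a)) (bas b)) (hcop ?T x) = x" for x
    by (simp add: lin_smul flip: unit_vector_eq)
  show "lin (\<lambda>(a, b). smul (hcou ?T (bas b)) (bas a)) (hcop ?T x) = x" for x
    by (simp add: lin_smul flip: unit_vector_eq)
  show "hcop ?T (amul ?T x y) = tmul (amul ?T) (amul ?T) (hcop ?T x) (hcop ?T y)" for x y
    by (simp add: tmul_def lin_smul lin_fun_smul smul_smul mult.commute)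
  show "hcop ?T (aone ?T) = tens (aone ?T) (aone ?T)"
    by simp
  show "hcou ?T (amul ?T x y) = hcou ?T x * hcou ?T y" for x y
    by simp
  show "hcou ?T (aone ?T) = 1"
    by simp
  show "mu (amul ?T) (tmap (hant ?T) id (hcop ?T x)) = smul (hcou ?T x) (aone ?T)" for x
    by (simp add: mu_def linear_map_smul[OF linear_map_tmap] tmap_bas lin_smul)
  show "mu (amul ?T) (tmap id (hant ?T) (hcop ?T x)) = smul (hcou ?T x) (aone ?T)" for x
    by (simp add: mu_def linear_map_smul[OF linear_map_tmap] tmap_bas lin_smul)
qed

abbreviation trivial_coaction :: "('a \<Rightarrow>\<^sub>0 'k::field) \<Rightarrow> ('a \<times> unit \<Rightarrow>\<^sub>0 'k)"
  where "trivial_coaction \<equiv> \<lambda>x. tens x (bas ())"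

lemma trivial_coaction_coassoc:
  "rassoc (tmap trivial_coaction id (tens x (bas ()))) = tmap id (hcop trivial_hopf) (tens x (bas ()))"
  by (rule linear_map_ext[OF linear_map_comp[OF linear_map_rassoc linear_map_comp[OF linear_map_tmap linear_map_tens_left]]
        linear_map_comp[OF linear_map_tmap linear_map_tens_left]])
     (simp add: tmap_bas rassoc_def)

lemma trivial_coaction_counit:
  "lin (\<lambda>(a, c). smul (hcou trivial_hopf (bas c)) (bas a)) (tens x (bas ())) = x"
  by (rule linear_map_ext[OF linear_map_comp[OF linear_map_lin linear_map_tens_left] linear_map_id(2)]) simp

lemma lin_fst_tens_unit: "lin (\<lambda>(a, u). bas a) (tens x (bas ())) = x"
  by (rule linear_map_ext[OF linear_map_comp[OF linear_map_lin linear_map_tens_left] linear_map_id(2)]) simp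

lemma tens_unit_lin_fst: "tens (lin (\<lambda>(a, u). bas a) y) (bas ()) = y"
  by (rule linear_map_ext_prod[OF linear_map_comp[OF linear_map_tens_left linear_map_lin] linear_map_id(2)]) simp

lemma coinv_trivial: "coinv trivial_hopf trivial_coaction = UNIV"
  by (simp add: coinv_def)

lemma coact2_trivial: "coact2 trivial_hopf trivial_coaction trivial_coaction X = tens X (bas ())"
  unfolding coact2_def by (rule linear_map_ext_prod[OF linear_map_lin linear_map_tens_left]) simp

lemma coinv2_trivial: "coinv2 trivial_hopf trivial_coaction W trivial_coaction = tensW UNIV W"
  by (auto simp: coinv2_def coact2_trivial)

lemma comodule_trivial_coaction: "subspace W \<Longrightarrow> comodule W trivial_coaction trivial_hopf"
  unfolding comodule_def using trivial_coaction_coassoc trivial_coaction_counit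
  by (auto simp: linear_map_tens_left tens_in_tensW)

section \<open>Every algebra is a quantum principal bundle over itself\<close>

lemma linear_map_tmul_left: "linear_map (\<lambda>X. tmul m m' X Y)"
  unfolding tmul_def by (rule linear_map_lin)

lemma linear_map_tmul_right: "linear_map (tmul m m' X)"
  unfolding tmul_def by (rule linear_map_lin_param) (auto simp: split_beta intro: linear_map_lin)

lemma linear_map_stheta: "linear_map (stheta A f)"
  unfolding stheta_def by (rule linear_map_lin)

locale unital_algebra =
  fixes A :: "('a, 'k::field, 'z) alg_scheme"
  assumes is_alg: "is_alg A"
begin

lemma amul_linear_left: "linear_map (\<lambda>x. amul A x y)"
  and amul_linear_right: "linear_map (amul A x)"
  using is_alg unfolding is_alg_def bilinear_map_def by auto

lemma amul_assoc: "amul A (amul A x y) z = amul A x (amul A y z)"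
  using is_alg unfolding is_alg_def by auto

lemma amul_one_left [simp]: "amul A (aone A) x = x"
  and amul_one_right [simp]: "amul A x (aone A) = x"
  using is_alg unfolding is_alg_def by auto

lemma linear_map_mu: "linear_map (mu (amul A))"
  unfolding mu_def by (rule linear_map_lin)

lemma mu_tens: "mu (amul A) (tens x y) = amul A x y"
  by (rule bilinear_ext[where F="\<lambda>x y. mu (amul A) (tens x y)" and G="\<lambda>x y. amul A x y"],
      (rule linear_map_comp[OF linear_map_mu linear_map_tens_left]
        linear_map_comp[OF linear_map_mu linear_map_tens_right] amul_linear_left amul_linear_right)+,
      simp add: mu_def)

lemma linear_map_lact: "linear_map (lact A p)"
  unfolding lact_def by (rule linear_map_lin)

lemma linear_map_lact_left: "linear_map (\<lambda>p. lact A p u)"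
  unfolding lact_def
  by (rule linear_map_lin_param) (auto intro: linear_map_comp[OF linear_map_tens_left amul_linear_left])

lemma lact_bas: "lact A p (bas (a, b)) = tens (amul A p (bas a)) (bas b)"
  by (simp add: lact_def)

lemma lact_tens: "lact A p (tens x y) = tens (amul A p x) y"
  by (rule bilinear_ext[where F="\<lambda>x y. lact A p (tens x y)" and G="\<lambda>x y. tens (amul A p x) y"],
      (rule linear_map_comp[OF linear_map_lact linear_map_tens_left]
        linear_map_comp[OF linear_map_lact linear_map_tens_right]
        linear_map_comp[OF linear_map_tens_left amul_linear_right] linear_map_tens_right)+,
      simp add: lact_def)

lemma lact_lact: "lact A p (lact A q u) = lact A (amul A p q) u"
  by (rule linear_map_ext_prod[OF linear_map_comp[OF linear_map_lact linear_map_lact] linear_map_lact])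
     (simp add: lact_bas lact_tens amul_assoc)

lemma lact_one: "lact A (aone A) u = u"
  by (rule linear_map_ext_prod[OF linear_map_lact linear_map_id(2)]) (simp add: lact_bas)

lemma mu_lact: "mu (amul A) (lact A p u) = amul A p (mu (amul A) u)"
  by (rule linear_map_ext_prod[OF linear_map_comp[OF linear_map_mu linear_map_lact]
        linear_map_comp[OF amul_linear_right linear_map_mu]])
     (simp add: lact_tens mu_tens amul_assoc flip: tens_bas)

lemma stheta_tens: "linear_map f \<Longrightarrow> stheta A f (tens x y) = lact A x (f y)"
  by (rule bilinear_ext[where F="\<lambda>x y. stheta A f (tens x y)" and G="\<lambda>x y. lact A x (f y)"],
      (rule linear_map_comp[OF linear_map_stheta linear_map_tens_left]
        linear_map_comp[OF linear_map_stheta linear_map_tens_right]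
        linear_map_lact_left linear_map_comp[OF linear_map_lact])+, simp_all add: stheta_def)

lemma stheta_lact: "linear_map f \<Longrightarrow> stheta A f (lact A p x) = lact A p (stheta A f x)"
  by (rule linear_map_ext_prod[OF linear_map_comp[OF linear_map_stheta linear_map_lact]
        linear_map_comp[OF linear_map_lact linear_map_stheta]])
     (simp add: lact_tens stheta_tens lact_lact flip: tens_bas)

lemma omega1_UNIV: "omega1 A UNIV = {x. mu (amul A) x = 0}"
  by (auto simp: omega1_def tensW_UNIV)

lemma balancing_span_left:
  assumes "x \<in> tensW UNIV I"
  shows "x - tens (aone A) (mu (amul A) x)
    \<in> fspan {tens (amul A p m) i - tens p (amul A m i) | p m i. m \<in> UNIV \<and> i \<in> I}"
proof -
  let ?G = "{tens (amul A p m) i - tens p (amul A m i) | p m i. m \<in> UNIV \<and> i \<in> I}"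
  have "x \<in> {x. x - tens (aone A) (mu (amul A) x) \<in> fspan ?G}"
    using assms unfolding tensW_def
  proof (rule fspan_least[rotated 2])
    show "subspace {x. x - tens (aone A) (mu (amul A) x) \<in> fspan ?G}"
      by (rule subspace_preimage[OF linear_map_diff_fun[OF linear_map_id(2)
            linear_map_comp[OF linear_map_tens_right linear_map_mu]] subspace_fspan])
    show "{tens a b |a b. a \<in> UNIV \<and> b \<in> I} \<subseteq> {x. x - tens (aone A) (mu (amul A) x) \<in> fspan ?G}"
    proof safe
      fix a b assume "b \<in> I"
      then have "tens (amul A (aone A) a) b - tens (aone A) (amul A a b) \<in> ?G"
        by blast
      then show "tens a b - tens (aone A) (mu (amul A) (tens a b)) \<in> fspan ?G"
        by (simp add: mu_tens fspan_base)
    qed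
  qed
  then show ?thesis
    by simp
qed

lemma balancing_span_right:
  assumes "x \<in> tensW J UNIV"
  shows "x - tens (mu (amul A) x) (aone A)
    \<in> fspan {tens (amul A j m) p - tens j (amul A m p) | j m p. j \<in> J \<and> m \<in> UNIV}"
proof -
  let ?G = "{tens (amul A j m) p - tens j (amul A m p) | j m p. j \<in> J \<and> m \<in> UNIV}"
  have "x \<in> {x. x - tens (mu (amul A) x) (aone A) \<in> fspan ?G}"
    using assms unfolding tensW_def
  proof (rule fspan_least[rotated 2])
    show "subspace {x. x - tens (mu (amul A) x) (aone A) \<in> fspan ?G}"
      by (rule subspace_preimage[OF linear_map_diff_fun[OF linear_map_id(2)
            linear_map_comp[OF linear_map_tens_left linear_map_mu]] subspace_fspan])
    show "{tens a b |a b. a \<in> J \<and> b \<in> UNIV} \<subseteq> {x. x - tens (mu (amul A) x) (aone A) \<in> fspan ?G}"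
    proof safe
      fix a b assume "a \<in> J"
      then have "tens (amul A a b) (aone A) - tens a (amul A b (aone A)) \<in> ?G"
        by blast
      then have "0 - (tens (amul A a b) (aone A) - tens a (amul A b (aone A))) \<in> fspan ?G"
        by (intro subspace_diff[OF subspace_fspan] subspace_zero[OF subspace_fspan] fspan_base)
      then show "tens a b - tens (mu (amul A) (tens a b)) (aone A) \<in> fspan ?G"
        by (simp add: mu_tens)
    qed
  qed
  then show ?thesis
    by simp
qed

lemma flat_over_UNIV: "flat_over A UNIV"
  unfolding flat_over_def
proof (intro conjI allI impI ballI)
  fix I x assume "x \<in> tensW UNIV I" "mu (amul A) x = 0"
  then show "x \<in> fspan {tens (amul A p m) i - tens p (amul A m i) |p m i. m \<in> UNIV \<and> i \<in> I}"
    using balancing_span_left[of x I] by (simp add: linear_map_zero[OF linear_map_tens_right])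
next
  fix J x assume "x \<in> tensW J UNIV" "mu (amul A) x = 0"
  then show "x \<in> fspan {tens (amul A j m) p - tens j (amul A m p) |j m p. j \<in> J \<and> m \<in> UNIV}"
    using balancing_span_right[of x J] by (simp add: linear_map_zero[OF linear_map_tens_left])
qed

lemma mu_eq_zero_iff_balanced:
  "mu (amul A) x = 0 \<longleftrightarrow> x \<in> fspan {tens (amul A p m) q - tens p (amul A m q) | p m q. m \<in> UNIV}"
proof
  assume "mu (amul A) x = 0"
  then show "x \<in> fspan {tens (amul A p m) q - tens p (amul A m q) | p m q. m \<in> UNIV}"
    using balancing_span_left[OF tensW_UNIV, of x] by (simp add: linear_map_zero[OF linear_map_tens_right])
next
  assume "x \<in> fspan {tens (amul A p m) q - tens p (amul A m q) | p m q. m \<in> UNIV}"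
  then have "x \<in> {x. mu (amul A) x = 0}"
    by (rule fspan_least[OF subspace_kernel[OF linear_map_mu], rotated])
       (auto simp: linear_map_diff[OF linear_map_mu] mu_tens amul_assoc)
  then show "mu (amul A) x = 0"
    by simp
qed

lemma canmap_trivial_coaction: "canmap A trivial_coaction x = tens (mu (amul A) x) (bas ())"
  unfolding canmap_def
  by (rule linear_map_ext_prod[OF linear_map_lin linear_map_comp[OF linear_map_tens_left linear_map_mu]])
     (simp add: mu_def)

lemma trivial_coaction_amul:
  "tens (amul A x y) (bas ()) = tmul (amul A) (amul trivial_hopf) (tens x (bas ())) (tens y (bas ()))"
  by (rule bilinear_ext[where F="\<lambda>x y. tens (amul A x y) (bas ())"
        and G="\<lambda>x y. tmul (amul A) (amul trivial_hopf) (tens x (bas ())) (tens y (bas ()))"],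
      (rule linear_map_comp[OF linear_map_tens_left amul_linear_left]
        linear_map_comp[OF linear_map_tens_left amul_linear_right]
        linear_map_comp[OF linear_map_tmul_left linear_map_tens_left]
        linear_map_comp[OF linear_map_tmul_right linear_map_tens_left])+,
      simp add: tmul_def)

lemma comod_alg_trivial_coaction: "comod_alg A trivial_hopf trivial_coaction"
  unfolding comod_alg_def
  by (intro conjI allI is_alg linear_map_tens_left trivial_coaction_coassoc trivial_coaction_counit
      trivial_coaction_amul) simp

lemma qpb_trivial_coaction: "qpb A trivial_hopf trivial_coaction"
  unfolding qpb_def coinv_trivial
proof (intro conjI allI)
  show "surj (canmap A trivial_coaction)"
  proof (rule surjI)
    show "canmap A trivial_coaction (tens (lin (\<lambda>(a, u). bas a) y) (aone A)) = y" for y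
      by (simp add: canmap_trivial_coaction mu_tens tens_unit_lin_fst)
  qed
  have "canmap A trivial_coaction x = 0 \<longleftrightarrow> mu (amul A) x = 0" for x
    by (metis canmap_trivial_coaction lin_fst_tens_unit linear_map_zero[OF linear_map_tens_left]
        linear_map_zero[OF linear_map_lin])
  then show "canmap A trivial_coaction x = 0
      \<longleftrightarrow> x \<in> fspan {tens (amul A p m) q - tens p (amul A m q) |p m q. m \<in> UNIV}" for x
    by (simp add: mu_eq_zero_iff_balanced)
qed (simp_all add: hopf_alg_trivial_hopf comod_alg_trivial_coaction flat_over_UNIV)

end

section \<open>The frame resolution of a Hopf algebra\<close>

definition theta :: "('a, 'k::field, 'z) hopf_scheme \<Rightarrow> ('a \<Rightarrow>\<^sub>0 'k) \<Rightarrow> ('a \<times> 'a \<Rightarrow>\<^sub>0 'k)"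
  where "theta H v = tmap (hant H) id (hcop H v)"

definition stheta_inv :: "('a, 'k::field, 'z) hopf_scheme \<Rightarrow> ('a \<times> 'a \<Rightarrow>\<^sub>0 'k) \<Rightarrow> ('a \<times> 'a \<Rightarrow>\<^sub>0 'k)"
  where "stheta_inv H = lin (\<lambda>(h, g). lact H (bas h) (hcop H (bas g)))"

definition id_counit :: "('a, 'k::field, 'z) hopf_scheme \<Rightarrow> ('a \<times> 'a \<Rightarrow>\<^sub>0 'k) \<Rightarrow> ('a \<Rightarrow>\<^sub>0 'k)"
  where "id_counit H = lin (\<lambda>(a, b). smul (hcou H (bas b)) (bas a))"

lemma linear_map_stheta_inv: "linear_map (stheta_inv H)"
  unfolding stheta_inv_def by (rule linear_map_lin)

lemma linear_map_id_counit: "linear_map (id_counit H)"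
  unfolding id_counit_def by (rule linear_map_lin)

locale hopf_algebra =
  fixes H :: "('a, 'k::field) hopf"
  assumes hopf_alg: "hopf_alg H"
begin

sublocale unital_algebra H
  using hopf_alg by unfold_locales (simp add: hopf_alg_def)

lemma hcop_linear: "linear_map (hcop H)"
  and hcou_linear: "linear_form (hcou H)"
  and coassoc: "rassoc (tmap (hcop H) id (hcop H x)) = tmap id (hcop H) (hcop H x)"
  and counit_left: "lin (\<lambda>(a, b). smul (hcou H (bas a)) (bas b)) (hcop H x) = x"
  and counit_right: "lin (\<lambda>(a, b). smul (hcou H (bas b)) (bas a)) (hcop H x) = x"
  and antipode_left: "mu (amul H) (tmap (hant H) id (hcop H x)) = smul (hcou H x) (aone H)"
  and antipode_right: "mu (amul H) (tmap id (hant H) (hcop H x)) = smul (hcou H x) (aone H)"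
  and hcou_one: "hcou H (aone H) = 1"
  using hopf_alg unfolding hopf_alg_def by auto

lemma hcou_add: "hcou H (x + y) = hcou H x + hcou H y"
  and hcou_smul: "hcou H (smul c x) = c * hcou H x"
  using hcou_linear unfolding linear_form_def by auto

lemma hcou_diff: "hcou H (x - y) = hcou H x - hcou H y"
  using hcou_add[of "x - y" y] by simp

lemma subspace_ker_hcou: "subspace {v. hcou H v = 0}"
  unfolding subspace_def using hcou_smul[of 0 0] by (simp add: hcou_add hcou_smul)

lemma linear_map_theta: "linear_map (theta H)"
  unfolding theta_def by (rule linear_map_comp[OF linear_map_tmap hcop_linear])

lemma stheta_inv_tens: "stheta_inv H (tens x y) = lact H x (hcop H y)"
  by (rule bilinear_ext[where F="\<lambda>x y. stheta_inv H (tens x y)" and G="\<lambda>x y. lact H x (hcop H y)"],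
      (rule linear_map_comp[OF linear_map_stheta_inv linear_map_tens_left]
        linear_map_comp[OF linear_map_stheta_inv linear_map_tens_right]
        linear_map_lact_left linear_map_comp[OF linear_map_lact hcop_linear])+,
      simp add: stheta_inv_def)

lemma stheta_inv_lact: "stheta_inv H (lact H p x) = lact H p (stheta_inv H x)"
  by (rule linear_map_ext_prod[OF linear_map_comp[OF linear_map_stheta_inv linear_map_lact]
        linear_map_comp[OF linear_map_lact linear_map_stheta_inv]])
     (simp add: lact_tens stheta_inv_tens lact_lact flip: tens_bas)

lemma id_counit_tens: "id_counit H (tens x y) = smul (hcou H y) x"
proof (rule bilinear_ext[where F="\<lambda>x y. id_counit H (tens x y)" and G="\<lambda>x y. smul (hcou H y) x"])
  show "linear_map (\<lambda>x. id_counit H (tens x y))" for y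
    by (rule linear_map_comp[OF linear_map_id_counit linear_map_tens_left])
  show "linear_map (\<lambda>y. id_counit H (tens (bas a) y))" for a
    by (rule linear_map_comp[OF linear_map_id_counit linear_map_tens_right])
  show "linear_map (\<lambda>x. smul (hcou H y) x)" for y
    by (rule linear_map_smul_fun)
  show "linear_map (\<lambda>y. smul (hcou H y) (bas a))" for a
    unfolding linear_map_def by (simp add: hcou_add hcou_smul smul_add_left smul_smul)
qed (simp add: id_counit_def)

lemma id_counit_lact: "id_counit H (lact H p x) = amul H p (id_counit H x)"
  by (rule linear_map_ext_prod[OF linear_map_comp[OF linear_map_id_counit linear_map_lact]
        linear_map_comp[OF amul_linear_right linear_map_id_counit]])
     (simp add: lact_tens id_counit_tens linear_map_smul[OF amul_linear_right] flip: tens_bas)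

lemma tmap12_hcop_hcop:
  assumes F: "linear_map F" and F_hcop: "\<And>x. F (hcop H x) = smul (hcou H x) (aone H)"
  shows "tmap12 F (tmap id (hcop H) (hcop H v)) = tens (aone H) v"
proof -
  have "tmap12 F (tmap id (hcop H) (hcop H v)) = tmap F id (tmap (hcop H) id (hcop H v))"
    by (simp add: tmap12_rassoc flip: coassoc)
  also have "\<dots> = tmap (\<lambda>x. smul (hcou H x) (aone H)) id (hcop H v)"
    by (rule linear_map_ext_prod[OF linear_map_comp[OF linear_map_tmap linear_map_tmap] linear_map_tmap])
       (simp add: tmap_bas tmap_tens[OF F linear_map_id(1)] F_hcop)
  also have "\<dots> = tens (aone H) (lin (\<lambda>(a, b). smul (hcou H (bas a)) (bas b)) (hcop H v))"
    by (rule linear_map_ext_prod[OF linear_map_tmap linear_map_comp[OF linear_map_tens_right linear_map_lin]])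
       (simp add: tmap_bas tens_smul_left tens_smul_right)
  finally show ?thesis
    by (simp add: counit_left)
qed

lemma stheta_inv_theta: "stheta_inv H (theta H v) = tens (aone H) v"
proof -
  let ?F = "\<lambda>x. mu (amul H) (tmap (hant H) id x)"
  have "stheta_inv H (tmap (hant H) id X) = tmap12 ?F (tmap id (hcop H) X)" for X
    by (rule linear_map_ext_prod[OF linear_map_comp[OF linear_map_stheta_inv linear_map_tmap]
          linear_map_comp[OF linear_map_tmap12 linear_map_tmap]])
       (simp add: tmap_bas stheta_inv_tens tmap12_def lin_tens_bas mu_tens lact_def)
  then show ?thesis
    unfolding theta_def
    by (simp add: tmap12_hcop_hcop linear_map_comp[OF linear_map_mu linear_map_tmap] antipode_left)
qed

lemma stheta_hcop: "stheta H (theta H) (hcop H v) = tens (aone H) v"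
proof -
  let ?F = "\<lambda>x. mu (amul H) (tmap id (hant H) x)"
  have "stheta H (theta H) X = tmap12 ?F (tmap id (hcop H) X)" for X
  proof (rule linear_map_ext_prod[OF linear_map_stheta linear_map_comp[OF linear_map_tmap12 linear_map_tmap]])
    fix a b
    have "lact H (bas a) (tmap (hant H) id Y)
        = lin (\<lambda>(c, d). tens (amul H (bas a) (hant H (bas c))) (bas d)) Y" for Y
      by (rule linear_map_ext_prod[OF linear_map_comp[OF linear_map_lact linear_map_tmap] linear_map_lin])
         (simp add: tmap_bas lact_tens)
    then show "stheta H (theta H) (bas (a, b)) = tmap12 ?F (tmap id (hcop H) (bas (a, b)))"
      by (simp add: tmap_bas tmap12_def lin_tens_bas mu_tens stheta_def theta_def)
  qed
  then show ?thesis
    by (simp add: tmap12_hcop_hcop linear_map_comp[OF linear_map_mu linear_map_tmap] antipode_right)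
qed

lemma stheta_inv_stheta: "stheta_inv H (stheta H (theta H) x) = x"
  by (rule linear_map_ext_prod[OF linear_map_comp[OF linear_map_stheta_inv linear_map_stheta] linear_map_id(2)])
     (simp add: stheta_def stheta_inv_lact stheta_inv_theta lact_tens)

lemma stheta_stheta_inv: "stheta H (theta H) (stheta_inv H x) = x"
  by (rule linear_map_ext_prod[OF linear_map_comp[OF linear_map_stheta linear_map_stheta_inv] linear_map_id(2)])
     (simp add: stheta_inv_def stheta_lact[OF linear_map_theta] stheta_hcop lact_tens)

lemma mu_theta: "mu (amul H) (theta H v) = smul (hcou H v) (aone H)"
  unfolding theta_def by (rule antipode_left)

lemma mu_stheta: "mu (amul H) (stheta H (theta H) x) = id_counit H x"
  by (rule linear_map_ext_prod[OF linear_map_comp[OF linear_map_mu linear_map_stheta] linear_map_id_counit])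
     (simp add: stheta_def mu_lact mu_theta linear_map_smul[OF amul_linear_right] id_counit_def)

lemma id_counit_stheta_inv: "id_counit H (stheta_inv H w) = mu (amul H) w"
  by (rule linear_map_ext_prod[OF linear_map_comp[OF linear_map_id_counit linear_map_stheta_inv] linear_map_mu])
     (simp add: stheta_inv_def id_counit_lact mu_def counit_right[folded id_counit_def])

lemma id_counit_eq_zero_iff: "id_counit H x = 0 \<longleftrightarrow> x \<in> tensW UNIV {v. hcou H v = 0}"
proof
  let ?L = "\<lambda>y. y - tens (id_counit H y) (aone H)"
  assume "id_counit H x = 0"
  have "?L x \<in> tensW UNIV {v. hcou H v = 0}"
  proof (rule linear_map_in_subspace[where L = ?L])
    show "linear_map ?L"
      by (rule linear_map_diff_fun[OF linear_map_id(2) linear_map_comp[OF linear_map_tens_left linear_map_id_counit]])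
    show "subspace (tensW UNIV {v. hcou H v = 0})"
      unfolding tensW_def by (rule subspace_fspan)
    fix a :: "'a \<times> 'a"
    obtain p q where a: "a = (p, q)"
      by (cases a)
    have "?L (bas a) = tens (bas p) (bas q - smul (hcou H (bas q)) (aone H))"
      by (simp add: a id_counit_def linear_map_diff[OF linear_map_tens_right] tens_smul_left tens_smul_right)
    also have "\<dots> \<in> tensW UNIV {v. hcou H v = 0}"
      by (rule tens_in_tensW) (auto simp: hcou_diff hcou_smul hcou_one)
    finally show "?L (bas a) \<in> tensW UNIV {v. hcou H v = 0}" .
  qed
  with \<open>id_counit H x = 0\<close> show "x \<in> tensW UNIV {v. hcou H v = 0}"
    by (simp add: linear_map_zero[OF linear_map_tens_left])
next
  assume "x \<in> tensW UNIV {v. hcou H v = 0}"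
  then have "x \<in> {x. id_counit H x = 0}"
    unfolding tensW_def
    by (rule fspan_least[OF subspace_kernel[OF linear_map_id_counit], rotated]) (auto simp: id_counit_tens)
  then show "id_counit H x = 0"
    by simp
qed

lemma bij_betw_stheta: "bij_betw (stheta H (theta H)) (tensW UNIV {v. hcou H v = 0}) (omega1 H UNIV)"
proof (rule bij_betw_byWitness[where f' = "stheta_inv H"])
  show "stheta H (theta H) ` tensW UNIV {v. hcou H v = 0} \<subseteq> omega1 H UNIV"
    by (auto simp: omega1_UNIV mu_stheta id_counit_eq_zero_iff)
  show "stheta_inv H ` omega1 H UNIV \<subseteq> tensW UNIV {v. hcou H v = 0}"
    by (auto simp: omega1_UNIV id_counit_stheta_inv simp flip: id_counit_eq_zero_iff)
qed (simp_all add: stheta_inv_stheta stheta_stheta_inv)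

lemma qfr_theta:
  "qfr H trivial_hopf trivial_coaction {v. hcou H v = 0} trivial_coaction (theta H)"
  unfolding qfr_def coinv_trivial coinv2_trivial
proof (intro conjI ballI)
  fix w assume w: "w \<in> {v. hcou H v = 0}"
  then show "theta H w \<in> omega1 H UNIV"
    by (simp add: omega1_UNIV mu_theta)
  show "coact2 trivial_hopf trivial_coaction trivial_coaction (theta H w) = tmap (theta H) id (tens w (bas ()))"
    by (simp add: coact2_trivial tmap_tens[OF linear_map_theta linear_map_id(1)])
  from w have "theta H w = lact H (aone H) (theta H w) \<and> theta H w \<in> omega1 H UNIV"
    by (simp add: omega1_UNIV mu_theta lact_one)
  then show "theta H w \<in> fspan {lact H p u |p u. u \<in> omega1 H UNIV}"
    by (intro fspan_base) blast
qed (simp_all add: qpb_trivial_coaction comodule_trivial_coaction subspace_ker_hcou linear_map_theta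
    bij_betw_stheta)

lemma the_stheta_preimage:
  assumes "w \<in> omega1 H UNIV"
  shows "(THE x. x \<in> coinv2 trivial_hopf trivial_coaction {v. hcou H v = 0} trivial_coaction
      \<and> stheta H (theta H) x = w) = stheta_inv H w"
proof (rule the_equality)
  have "stheta_inv H w \<in> tensW UNIV {v. hcou H v = 0}"
    using assms by (simp add: omega1_UNIV id_counit_stheta_inv flip: id_counit_eq_zero_iff)
  then show "stheta_inv H w \<in> coinv2 trivial_hopf trivial_coaction {v. hcou H v = 0} trivial_coaction
      \<and> stheta H (theta H) (stheta_inv H w) = w"
    by (simp add: coinv2_trivial stheta_stheta_inv)
qed (metis stheta_inv_stheta)

lemma tmap_id_theta_stheta_inv:
  "tmap id (theta H) (stheta_inv H (bas (h, g)))
    = lin (\<lambda>(x, y, z). tens (amul H (bas h) (bas x)) (tens (hant H (bas y)) (bas z)))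
        (tmap id (hcop H) (hcop H (bas g)))"
proof -
  have "tmap id (theta H) (lact H (bas h) X)
      = lin (\<lambda>(x, y, z). tens (amul H (bas h) (bas x)) (tens (hant H (bas y)) (bas z))) (tmap id (hcop H) X)"
    for X
  proof (rule linear_map_ext_prod[OF linear_map_comp[OF linear_map_tmap linear_map_lact]
        linear_map_comp[OF linear_map_lin linear_map_tmap]])
    fix a b
    have "tens c (tmap (hant H) id Y) = lin (\<lambda>(y, z). tens c (tens (hant H (bas y)) (bas z))) Y" for c Y
      by (rule linear_map_ext_prod[OF linear_map_comp[OF linear_map_tens_right linear_map_tmap] linear_map_lin])
         (simp add: tmap_bas)
    then show "tmap id (theta H) (lact H (bas h) (bas (a, b)))
        = lin (\<lambda>(x, y, z). tens (amul H (bas h) (bas x)) (tens (hant H (bas y)) (bas z)))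
            (tmap id (hcop H) (bas (a, b)))"
      by (simp add: lact_bas tmap_tens[OF linear_map_id(1) linear_map_theta] theta_def tmap_bas lin_tens_bas)
  qed
  then show ?thesis
    by (simp add: stheta_inv_def)
qed

lemma nabla_theta:
  assumes "\<omega> (aone trivial_hopf) = 0" and w: "w \<in> omega1 H UNIV"
  shows "nabla H trivial_hopf trivial_coaction {v. hcou H v = 0} trivial_coaction (theta H) \<omega> w
    = lin (\<lambda>(h, g). tens (aone H) (tens (bas h) (bas g))
        - lin (\<lambda>(x, y, z). tens (amul H (bas h) (bas x)) (tens (hant H (bas y)) (bas z)))
            (tmap id (hcop H) (hcop H (bas g)))) w"
proof -
  have connection_zero: "\<omega> (bas c) = 0" for c :: unit
    using assms(1) by simp
  have id_theta: "lin (\<lambda>(p, v). tens (bas p) (theta H (bas v))) = tmap id (theta H)"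
    by (simp add: tmap_def)
  have "tens (aone H) w = lin (\<lambda>(h, g). tens (aone H) (tens (bas h) (bas g))) w"
    by (rule linear_map_ext_prod[OF linear_map_tens_right linear_map_lin]) simp
  moreover have "tmap id (theta H) (stheta_inv H w)
      = lin (\<lambda>(h, g). lin (\<lambda>(x, y, z). tens (amul H (bas h) (bas x)) (tens (hant H (bas y)) (bas z)))
          (tmap id (hcop H) (hcop H (bas g)))) w"
    by (rule linear_map_ext_prod[OF linear_map_comp[OF linear_map_tmap linear_map_stheta_inv] linear_map_lin])
       (simp add: tmap_id_theta_stheta_inv)
  ultimately show ?thesis
    unfolding nabla_def Let_def the_stheta_preimage[OF w] id_theta
    by (simp add: connection_zero omul_def linear_map_zero[OF linear_map_lact] lin_case_prod_zero
        lin_case_prod_diff)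
qed

lemma torsion_theta:
  assumes "\<omega> (aone trivial_hopf) = 0" and "w \<in> omega1 H UNIV"
  shows "torsion H trivial_hopf trivial_coaction {v. hcou H v = 0} trivial_coaction (theta H) \<omega> w
    = lin (\<lambda>(h, g). tens (bas h) (tens (bas g) (aone H)) - tens (bas h) (tens (aone H) (bas g))
        + lin (\<lambda>(x, y, z). tens (amul H (bas h) (bas x)) (tens (hant H (bas y)) (bas z)))
            (tmap id (hcop H) (hcop H (bas g)))) w"
  unfolding torsion_def nabla_theta[where \<omega> = \<omega> and w = w, OF assms] d1_def
  by (simp add: lin_case_prod_add lin_case_prod_diff)

end

theorem proposition4p1:
  fixes H :: "('b, 'k::field) hopf"
  assumes "hopf_alg H"
  shows "qfr H (trivial_hopf :: (unit, 'k) hopf) (\<lambda>h. tens h (bas ()))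
            {v. hcou H v = 0} (\<lambda>v. tens v (bas ())) (\<lambda>v. tmap (hant H) id (hcop H v))
     \<and> (\<forall>\<omega> :: (unit \<Rightarrow>\<^sub>0 'k) \<Rightarrow> ('b \<times> 'b \<Rightarrow>\<^sub>0 'k). linear_map \<omega> \<and> \<omega> (aone (trivial_hopf :: (unit, 'k) hopf)) = 0 \<longrightarrow>
        (\<forall>w\<in>omega1 H UNIV.
           nabla H (trivial_hopf :: (unit, 'k) hopf) (\<lambda>h. tens h (bas ()))
               {v. hcou H v = 0} (\<lambda>v. tens v (bas ())) (\<lambda>v. tmap (hant H) id (hcop H v)) \<omega> w
             = lin (\<lambda>(h, g). tens (aone H) (tens (bas h) (bas g))
                 - lin (\<lambda>(x, y, z). tens (amul H (bas h) (bas x)) (tens (hant H (bas y)) (bas z)))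
                       (tmap id (hcop H) (hcop H (bas g)))) w
         \<and> torsion H (trivial_hopf :: (unit, 'k) hopf) (\<lambda>h. tens h (bas ()))
               {v. hcou H v = 0} (\<lambda>v. tens v (bas ())) (\<lambda>v. tmap (hant H) id (hcop H v)) \<omega> w
             = lin (\<lambda>(h, g). tens (bas h) (tens (bas g) (aone H)) - tens (bas h) (tens (aone H) (bas g))
                 + lin (\<lambda>(x, y, z). tens (amul H (bas h) (bas x)) (tens (hant H (bas y)) (bas z)))
                       (tmap id (hcop H) (hcop H (bas g)))) w))"
proof -
  interpret hopf_algebra H
    by (rule hopf_algebra.intro) (rule assms)
  have "(\<lambda>v. tmap (hant H) id (hcop H v)) = theta H"
    by (simp add: fun_eq_iff theta_def)
  then show ?thesis
    using qfr_theta nabla_theta torsion_theta by simp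
qed

end
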